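(* Let $G$ be a graph, $t\in\mathbb N$, and let $I_t=I_t^{(\mathcal P)}(G)$ for $\mathcal P\in\{push,pull,pp\}$. Then $$\mathrm{Var}\big[|I_{t+1}|\,\big|\,I_t\big]\le\mathbb E\big[|I_{t+1}|\,\big|\,I_t\big].$$
   Context: Rumour spreading protocols on a graph $G$, synchronous rounds, each message transmission succeeding independently with probability $q\in(0,1]$. push: every informed vertex chooses a neighbour independently and uniformly at random (iuar) and informs it (if the transmission succeeds). pull: every uninformed vertex chooses a neighbour iuar; if it is informed and transmission succeeds, the asking vertex becomes informed. push\&pull (pp): every vertex chooses a neighbour iuar; if one of the two is informed (and the transmission succeeds) both become informed. $I_t^{(\mathcal P)}(G)$ denotes the set of vertices informed at the beginning of round $t$ under protocol $\mathcal P$. *)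

theory Defs
  imports "HOL-Probability.Probability"
begin

definition graph :: "'a set \<Rightarrow> ('a \<Rightarrow> 'a \<Rightarrow> bool) \<Rightarrow> bool" where
  "graph V E \<longleftrightarrow> finite V \<and> (\<forall>u w. E u w \<longrightarrow> u \<in> V \<and> w \<in> V)
     \<and> (\<forall>u w. E u w \<longrightarrow> E w u) \<and> (\<forall>u. \<not> E u u)"

definition nbrs :: "'a set \<Rightarrow> ('a \<Rightarrow> 'a \<Rightarrow> bool) \<Rightarrow> 'a \<Rightarrow> 'a set" where
  "nbrs V E v = {w \<in> V. E v w}"

datatype protocol = Push | Pull | PushPull

definition vertex_choice :: "'a set \<Rightarrow> ('a \<Rightarrow> 'a \<Rightarrow> bool) \<Rightarrow> real \<Rightarrow> 'a \<Rightarrow> ('a option \<times> bool) pmf" where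
  "vertex_choice V E q v =
     pair_pmf (if nbrs V E v = {} then return_pmf None else map_pmf Some (pmf_of_set (nbrs V E v)))
              (bernoulli_pmf q)"

definition round_choices :: "'a set \<Rightarrow> ('a \<Rightarrow> 'a \<Rightarrow> bool) \<Rightarrow> real \<Rightarrow> ('a \<Rightarrow> 'a option \<times> bool) pmf" where
  "round_choices V E q = Pi_pmf V (None, False) (vertex_choice V E q)"

definition next_informed :: "protocol \<Rightarrow> 'a set \<Rightarrow> 'a set \<Rightarrow> ('a \<Rightarrow> 'a option \<times> bool) \<Rightarrow> 'a set" where
  "next_informed P V I c =
     (case P of
        Push \<Rightarrow> I \<union> {w. \<exists>v\<in>I. fst (c v) = Some w \<and> snd (c v)}
      | Pull \<Rightarrow> I \<union> {v \<in> V - I. \<exists>w\<in>I. fst (c v) = Some w \<and> snd (c v)}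
      | PushPull \<Rightarrow> I \<union> {w. \<exists>v\<in>I. fst (c v) = Some w \<and> snd (c v)}
                     \<union> {v \<in> V. \<exists>w\<in>I. fst (c v) = Some w \<and> snd (c v)})"

text \<open>Distribution of I_{t+1} conditioned on I_t = I.\<close>

definition round_step :: "protocol \<Rightarrow> 'a set \<Rightarrow> ('a \<Rightarrow> 'a \<Rightarrow> bool) \<Rightarrow> real \<Rightarrow> 'a set \<Rightarrow> 'a set pmf" where
  "round_step P V E q I = map_pmf (next_informed P V I) (round_choices V E q)"

end

theory Submission
  imports Defs
begin

text \<open>The size of the new informed set is the sum over vertices w of the indicators Y w that w is
informed after the round, and a sum of [0,1]-valued variables with pairwise nonpositive covariances
has variance at most its mean. For distinct w, w' outside I, the event that w stays uninformed is the
intersection over all vertices v of the events that the choice of v does not inform w; these choices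
are independent, and a single choice informs at most one vertex outside I, so for each v the two
complementary events are disjoint, hence negatively correlated. Negative correlation survives the
product over independent coordinates and passing to complements, giving Cov(Y w, Y w') \<le> 0.\<close>

lemma (in prob_space) integrable_unit_bounded:
  fixes X :: "'a \<Rightarrow> real"
  assumes "X \<in> borel_measurable M" and "\<And>x. x \<in> space M \<Longrightarrow> 0 \<le> X x \<and> X x \<le> 1"
  shows "integrable M X"
  using assms by (intro integrable_const_bound[where B = 1]) (auto intro!: AE_I2)

lemma (in prob_space) variance_sum_le_expectation:
  fixes Y :: "'i \<Rightarrow> 'a \<Rightarrow> real"
  assumes "finite W"
    and meas: "\<And>w. w \<in> W \<Longrightarrow> Y w \<in> borel_measurable M"
    and bounds: "\<And>w x. w \<in> W \<Longrightarrow> x \<in> space M \<Longrightarrow> 0 \<le> Y w x \<and> Y w x \<le> 1"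
    and neg_corr: "\<And>w w'. w \<in> W \<Longrightarrow> w' \<in> W \<Longrightarrow> w \<noteq> w' \<Longrightarrow>
       expectation (\<lambda>x. Y w x * Y w' x) \<le> expectation (Y w) * expectation (Y w')"
  shows "variance (\<lambda>x. \<Sum>w\<in>W. Y w x) \<le> expectation (\<lambda>x. \<Sum>w\<in>W. Y w x)"
proof -
  define \<mu> where "\<mu> w = expectation (Y w)" for w
  have int: "integrable M (Y w)" if "w \<in> W" for w
    using that meas bounds by (intro integrable_unit_bounded) auto
  have int2: "integrable M (\<lambda>x. Y w x * Y w' x)" if "w \<in> W" "w' \<in> W" for w w'
    using that meas bounds by (intro integrable_unit_bounded) (auto simp: mult_le_one)
  have sum_sq: "(\<Sum>w\<in>W. Y w x)\<^sup>2 = (\<Sum>w\<in>W. \<Sum>w'\<in>W. Y w x * Y w' x)" for x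
    by (simp add: power2_eq_square sum_product)
  have cov_le: "expectation (\<lambda>x. Y w x * Y w' x) - \<mu> w * \<mu> w' \<le> (if w = w' then \<mu> w else 0)"
    if "w \<in> W" "w' \<in> W" for w w'
  proof (cases "w = w'")
    case True
    have "expectation (\<lambda>x. Y w x * Y w x) \<le> \<mu> w"
      unfolding \<mu>_def using that bounds
      by (intro integral_mono int int2) (auto simp: mult_left_le)
    moreover have "0 \<le> \<mu> w * \<mu> w" by simp
    ultimately have "expectation (\<lambda>x. Y w x * Y w x) - \<mu> w * \<mu> w \<le> \<mu> w" by linarith
    with True show ?thesis by simp
  qed (use neg_corr that \<mu>_def in auto)
  have "variance (\<lambda>x. \<Sum>w\<in>W. Y w x)
      = (\<Sum>w\<in>W. \<Sum>w'\<in>W. expectation (\<lambda>x. Y w x * Y w' x) - \<mu> w * \<mu> w')"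
    using int int2 unfolding \<mu>_def
    by (subst variance_eq) (auto simp: sum_sq power2_eq_square sum_product sum_subtractf)
  also have "\<dots> \<le> (\<Sum>w\<in>W. \<Sum>w'\<in>W. if w = w' then \<mu> w else 0)"
    by (intro sum_mono cov_le)
  also have "\<dots> = expectation (\<lambda>x. \<Sum>w\<in>W. Y w x)"
    using \<open>finite W\<close> int unfolding \<mu>_def by simp
  finally show ?thesis .
qed

lemma (in prob_space) neg_correlated_one_minus_iff:
  fixes X Y :: "'a \<Rightarrow> real"
  assumes "integrable M X" "integrable M Y" "integrable M (\<lambda>x. X x * Y x)"
  shows "expectation (\<lambda>x. (1 - X x) * (1 - Y x)) \<le> expectation (\<lambda>x. 1 - X x) * expectation (\<lambda>x. 1 - Y x)
     \<longleftrightarrow> expectation (\<lambda>x. X x * Y x) \<le> expectation X * expectation Y"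
proof -
  have "(\<lambda>x. (1 - X x) * (1 - Y x)) = (\<lambda>x. 1 - X x - Y x + X x * Y x)"
    by (simp add: algebra_simps)
  then show ?thesis using assms by (simp add: prob_space algebra_simps)
qed

lemma (in prob_space) disjoint_events_complements_neg_correlated:
  assumes "A \<in> events" "B \<in> events" "A \<inter> B = {}"
  shows "expectation (\<lambda>x. (1 - indicator A x) * (1 - indicator B x))
    \<le> expectation (\<lambda>x. 1 - indicator A x) * expectation (\<lambda>x. 1 - indicator B x :: real)"
proof -
  have "(\<lambda>x. indicator A x * indicator B x :: real) = (\<lambda>x. 0)"
    using assms(3) by (auto simp: indicator_def fun_eq_iff)
  then show ?thesis using assms
    by (subst neg_correlated_one_minus_iff) (auto simp: measure_nonneg emeasure_eq_measure)
qed

lemma expectation_Pi_pmf_prod_mult_le: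
  fixes f g :: "'i \<Rightarrow> 'b \<Rightarrow> real"
  assumes "finite A"
    and f_bounds: "\<And>i x. i \<in> A \<Longrightarrow> 0 \<le> f i x \<and> f i x \<le> 1"
    and g_bounds: "\<And>i x. i \<in> A \<Longrightarrow> 0 \<le> g i x \<and> g i x \<le> 1"
    and neg_corr: "\<And>i. i \<in> A \<Longrightarrow> measure_pmf.expectation (p i) (\<lambda>x. f i x * g i x)
       \<le> measure_pmf.expectation (p i) (f i) * measure_pmf.expectation (p i) (g i)"
  shows "measure_pmf.expectation (Pi_pmf A d p) (\<lambda>c. (\<Prod>i\<in>A. f i (c i)) * (\<Prod>i\<in>A. g i (c i)))
    \<le> measure_pmf.expectation (Pi_pmf A d p) (\<lambda>c. \<Prod>i\<in>A. f i (c i))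
      * measure_pmf.expectation (Pi_pmf A d p) (\<lambda>c. \<Prod>i\<in>A. g i (c i))"
proof -
  have int: "integrable (measure_pmf (p i)) (h :: 'b \<Rightarrow> real)" if "\<And>x. 0 \<le> h x \<and> h x \<le> 1" for i h
    using that by (intro measure_pmf.integrable_unit_bounded) auto
  have "measure_pmf.expectation (Pi_pmf A d p) (\<lambda>c. (\<Prod>i\<in>A. f i (c i)) * (\<Prod>i\<in>A. g i (c i)))
      = (\<Prod>i\<in>A. measure_pmf.expectation (p i) (\<lambda>x. f i x * g i x))"
    unfolding prod.distrib[symmetric] using f_bounds g_bounds
    by (intro expectation_prod_Pi_pmf \<open>finite A\<close> int) (auto simp: mult_le_one)
  also have "\<dots> \<le> (\<Prod>i\<in>A. measure_pmf.expectation (p i) (f i) * measure_pmf.expectation (p i) (g i))"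
    using f_bounds g_bounds neg_corr by (intro prod_mono conjI integral_nonneg_AE) auto
  also have "\<dots> = measure_pmf.expectation (Pi_pmf A d p) (\<lambda>c. \<Prod>i\<in>A. f i (c i))
      * measure_pmf.expectation (Pi_pmf A d p) (\<lambda>c. \<Prod>i\<in>A. g i (c i))"
    unfolding prod.distrib using f_bounds g_bounds
    by (subst (1 2) expectation_prod_Pi_pmf) (auto intro: \<open>finite A\<close> int)
  finally show ?thesis .
qed

lemma prod_one_minus_of_bool:
  "finite A \<Longrightarrow> (\<Prod>a\<in>A. 1 - of_bool (Q a)) = (of_bool (\<forall>a\<in>A. \<not> Q a) :: 'b :: comm_ring_1)"
  by (induction A rule: finite_induct) auto

definition informs :: "protocol \<Rightarrow> 'a set \<Rightarrow> 'a \<Rightarrow> 'a option \<times> bool \<Rightarrow> 'a \<Rightarrow> bool" where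
  "informs P I v x w \<longleftrightarrow> (case P of
      Push \<Rightarrow> v \<in> I \<and> fst x = Some w \<and> snd x
    | Pull \<Rightarrow> v = w \<and> (\<exists>u\<in>I. fst x = Some u \<and> snd x)
    | PushPull \<Rightarrow> (v \<in> I \<and> fst x = Some w \<and> snd x) \<or> (v = w \<and> (\<exists>u\<in>I. fst x = Some u \<and> snd x)))"

lemma mem_next_informed_iff:
  assumes "I \<subseteq> V" "w \<in> V"
  shows "w \<in> next_informed P V I c \<longleftrightarrow> w \<in> I \<or> (\<exists>v\<in>V. informs P I v (c v) w)"
  using assms by (cases P) (auto simp: next_informed_def informs_def)

lemma subset_next_informed: "I \<subseteq> next_informed P V I c"
  by (cases P) (auto simp: next_informed_def)

lemma informs_at_most_one_uninformed:
  assumes "w \<notin> I" "w' \<notin> I" "w \<noteq> w'"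
  shows "\<not> (informs P I v x w \<and> informs P I v x w')"
  using assms by (cases P) (auto simp: informs_def)

lemma round_choices_target_in_vertices:
  assumes "finite V" "c \<in> set_pmf (round_choices V E q)" "fst (c v) = Some u"
  shows "u \<in> V"
proof -
  have "c v \<in> set_pmf (vertex_choice V E q v)" if "v \<in> V"
    using assms(1,2) that by (auto simp: round_choices_def set_Pi_pmf PiE_dflt_def)
  moreover have "c v = (None, False)" if "v \<notin> V"
    using assms(1,2) that by (auto simp: round_choices_def set_Pi_pmf PiE_dflt_def)
  moreover have "finite (nbrs V E v)"
    using assms(1) by (simp add: nbrs_def)
  ultimately show ?thesis
    using assms(3) by (cases "v \<in> V") (auto simp: vertex_choice_def nbrs_def split: if_splits)
qed

lemma next_informed_subset:
  assumes "finite V" "I \<subseteq> V" "c \<in> set_pmf (round_choices V E q)"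
  shows "next_informed P V I c \<subseteq> V"
  using assms round_choices_target_in_vertices[OF assms(1,3)]
  by (cases P) (auto simp: next_informed_def)

lemma uninformed_indicator_eq_prod:
  assumes "finite V" "I \<subseteq> V" "w \<in> V - I"
  shows "1 - of_bool (w \<in> next_informed P V I c)
    = (\<Prod>v\<in>V. 1 - indicator {x. informs P I v x w} (c v) :: real)"
  using assms by (simp add: mem_next_informed_iff indicator_def prod_one_minus_of_bool)

lemma informed_indicators_neg_correlated:
  fixes V :: "'a set"
  assumes "finite V" "I \<subseteq> V" "w \<in> V" "w' \<in> V" "w \<noteq> w'"
  shows "measure_pmf.expectation (round_choices V E q)
      (\<lambda>c. of_bool (w \<in> next_informed P V I c) * of_bool (w' \<in> next_informed P V I c) :: real)
    \<le> measure_pmf.expectation (round_choices V E q) (\<lambda>c. of_bool (w \<in> next_informed P V I c))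
      * measure_pmf.expectation (round_choices V E q) (\<lambda>c. of_bool (w' \<in> next_informed P V I c))"
proof -
  let ?E = "measure_pmf.expectation (round_choices V E q)"
  define Y where "Y = (\<lambda>u c. of_bool (u \<in> next_informed P V I c) :: real)"
  have "?E (\<lambda>c. Y w c * Y w' c) \<le> ?E (Y w) * ?E (Y w')"
  proof (cases "w \<in> I \<or> w' \<in> I")
    case True
    have "Y u = (\<lambda>_. 1)" if "u \<in> I" for u
      using that subset_next_informed by (fastforce simp: Y_def)
    with True show ?thesis
      by auto
  next
    case False
    define f where "f u v x = (1 - indicator {x. informs P I v x u} x :: real)" for u v x
    have uninformed_w: "w \<in> V - I" and uninformed_w': "w' \<in> V - I"
      using False assms(3,4) by auto
    have uninformed: "1 - Y u c = (\<Prod>v\<in>V. f u v (c v))" if "u \<in> V - I" for u c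
      using uninformed_indicator_eq_prod[OF assms(1,2) that] by (simp add: Y_def f_def)
    have "?E (\<lambda>c. (\<Prod>v\<in>V. f w v (c v)) * (\<Prod>v\<in>V. f w' v (c v)))
        \<le> ?E (\<lambda>c. \<Prod>v\<in>V. f w v (c v)) * ?E (\<lambda>c. \<Prod>v\<in>V. f w' v (c v))"
      unfolding round_choices_def
    proof (intro expectation_Pi_pmf_prod_mult_le \<open>finite V\<close>)
      show "measure_pmf.expectation (vertex_choice V E q v) (\<lambda>x. f w v x * f w' v x)
        \<le> measure_pmf.expectation (vertex_choice V E q v) (f w v)
          * measure_pmf.expectation (vertex_choice V E q v) (f w' v)" for v
        unfolding f_def using informs_at_most_one_uninformed[of w I w' P v] False \<open>w \<noteq> w'\<close>
        by (intro measure_pmf.disjoint_events_complements_neg_correlated) auto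
    qed (auto simp: f_def)
    then have "?E (\<lambda>c. (1 - Y w c) * (1 - Y w' c)) \<le> ?E (\<lambda>c. 1 - Y w c) * ?E (\<lambda>c. 1 - Y w' c)"
      by (simp only: uninformed[OF uninformed_w] uninformed[OF uninformed_w'])
    then show ?thesis
      by (subst (asm) measure_pmf.neg_correlated_one_minus_iff)
        (auto simp: Y_def intro!: measure_pmf.integrable_unit_bounded)
  qed
  then show ?thesis
    by (simp add: Y_def)
qed

theorem lemma2p1:
  fixes V :: "'a set" and E :: "'a \<Rightarrow> 'a \<Rightarrow> bool" and q :: real
    and I :: "'a set" and P :: protocol
  assumes "graph V E" and "0 < q" and "q \<le> 1" and "I \<subseteq> V"
  shows "measure_pmf.variance (round_step P V E q I) (\<lambda>S. real (card S))
           \<le> measure_pmf.expectation (round_step P V E q I) (\<lambda>S. real (card S))"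
proof -
  have "finite V" using assms(1) by (simp add: graph_def)
  define C where "C = round_choices V E q"
  define N where "N = next_informed P V I"
  define Y where "Y w c = (of_bool (w \<in> N c) :: real)" for w c
  have card_eq: "AE c in C. real (card (N c)) = (\<Sum>w\<in>V. Y w c)"
  proof (rule AE_pmfI)
    fix c assume "c \<in> set_pmf C"
    then have "N c \<subseteq> V"
      unfolding C_def N_def using next_informed_subset \<open>finite V\<close> assms(4) by blast
    then show "real (card (N c)) = (\<Sum>w\<in>V. Y w c)"
      using \<open>finite V\<close> by (simp add: Y_def Int_absorb1 Int_def[symmetric])
  qed
  have mean_eq: "measure_pmf.expectation C (\<lambda>c. real (card (N c)))
      = measure_pmf.expectation C (\<lambda>c. \<Sum>w\<in>V. Y w c)"
    by (rule integral_cong_AE) (simp_all add: card_eq)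
  have var_eq: "measure_pmf.variance C (\<lambda>c. real (card (N c)))
      = measure_pmf.variance C (\<lambda>c. \<Sum>w\<in>V. Y w c)"
    unfolding mean_eq by (rule integral_cong_AE) (use card_eq in auto)
  have "measure_pmf.variance C (\<lambda>c. \<Sum>w\<in>V. Y w c) \<le> measure_pmf.expectation C (\<lambda>c. \<Sum>w\<in>V. Y w c)"
    unfolding C_def Y_def N_def using \<open>finite V\<close> assms(4) informed_indicators_neg_correlated
    by (intro measure_pmf.variance_sum_le_expectation) auto
  moreover have "round_step P V E q I = map_pmf N C"
    unfolding round_step_def C_def N_def ..
  ultimately show ?thesis
    using mean_eq var_eq by simp
qed

end
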